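(* Let $n\in\mathbb{N}$ and $a_1,\dots,a_n\in\mathbb{N}$ with $\prod_{j=1}^na_j-(-1)^n>0$ and, if $n$ is even, neither $a_j=1$ for all even $j$ nor $a_j=1$ for all odd $j$. Then there is a unique tuple $(w_1,\dots,w_n)$ of rational numbers with $a_jw_j+w_{j-1}=1$ for all $j\in\{1,\dots,n\}$, where $w_0:=w_n$; it satisfies $w_j\in\mathbb{Q}\cap(0,1)$ and is given by $w_j=\frac{v_j}{d}$ with $$v_j=\rho(a_{j-1},a_{j-2},\dots,a_2,a_1,a_n,a_{n-1},\dots,a_{j+1}),\qquad d=\prod_{j=1}^na_j-(-1)^n.$$ Let $\gamma=\gcd(v_1,d)$. Then writing $w_j=\frac{s_j}{t_j}$ with $s_j,t_j\in\mathbb{N}$ coprime, one has $s_j=\frac{v_j}{\gamma}$ and $t_1=\dots=t_n=\frac{d}{\gamma}$; in particular $\gamma=\gcd(v_j,d)$ for every $j$. Moreover $\prod_{j=1}^n\left(\frac1{w_j}-1\right)=\prod_{j=1}^na_j$ (this is the Milnor number $\mu$), and $$D_{\mathbf w}=\gamma\cdot\Lambda_{d/\gamma}+(-1)^n\Lambda_1 .$$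
   Context: The function $\rho:\bigcup_{k\ge0}\mathbb{Z}^k\to\mathbb{Z}$ is $\rho(x_1,\dots,x_k)=x_1\cdots x_k-x_2\cdots x_k+\dots+(-1)^{k-1}x_k+(-1)^k$, with $\rho(\emptyset)=1$. $S^{UR}$ is the set of roots of unity and $\mathbb{Q}\langle S^{UR}\rangle$ its group ring over $\mathbb{Q}$ (elements $\sum b_j\langle\zeta_j\rangle$, product $\langle\zeta_1\rangle\langle\zeta_2\rangle=\langle\zeta_1\zeta_2\rangle$). $\Lambda_m=\sum_{a=0}^{m-1}\langle e^{2\pi i a/m}\rangle$. For weights $w_j=s_j/t_j\in\mathbb{Q}\cap(0,1)$ with $\gcd(s_j,t_j)=1$, $D_{\mathbf w}=\prod_{j=1}^n\left(\frac1{s_j}\Lambda_{t_j}-\Lambda_1\right)$. *)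

theory Defs
  imports Complex_Main
begin

definition rho :: "int list \<Rightarrow> int" where
  "rho xs = (\<Sum>i<length xs. (-1)^i * prod_list (drop i xs)) + (-1) ^ length xs"

text \<open>Index a_(j-k) read cyclically in {1..n} (for 1 <= j <= n, 1 <= k <= n-1).\<close>
definition vlist :: "nat \<Rightarrow> (nat \<Rightarrow> nat) \<Rightarrow> nat \<Rightarrow> int list" where
  "vlist n a j = map (\<lambda>k. int (a ((j + n - k - 1) mod n + 1))) [1..<n]"

text \<open>Group ring Q<S^UR>: finitely supported functions from complex numbers
  (supported on roots of unity) to rationals, with convolution product.\<close>
type_synonym qgr = "complex \<Rightarrow> rat"

definition gr_basis :: "complex \<Rightarrow> qgr" where
  "gr_basis \<zeta> = (\<lambda>z. if z = \<zeta> then 1 else 0)"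

definition gr_add :: "qgr \<Rightarrow> qgr \<Rightarrow> qgr" where
  "gr_add f g = (\<lambda>z. f z + g z)"

definition gr_diff :: "qgr \<Rightarrow> qgr \<Rightarrow> qgr" where
  "gr_diff f g = (\<lambda>z. f z - g z)"

definition gr_smult :: "rat \<Rightarrow> qgr \<Rightarrow> qgr" where
  "gr_smult c f = (\<lambda>z. c * f z)"

definition gr_mult :: "qgr \<Rightarrow> qgr \<Rightarrow> qgr" where
  "gr_mult f g = (\<lambda>z. \<Sum>p\<in>{(x, y). f x \<noteq> 0 \<and> g y \<noteq> 0 \<and> x * y = z}. f (fst p) * g (snd p))"

definition gr_one :: qgr where "gr_one = gr_basis 1"

fun gr_prod :: "(nat \<Rightarrow> qgr) \<Rightarrow> nat \<Rightarrow> qgr" where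
  "gr_prod F 0 = gr_one"
| "gr_prod F (Suc k) = gr_mult (gr_prod F k) (F (Suc k))"

definition Lambda :: "nat \<Rightarrow> qgr" where
  "Lambda m = (\<lambda>z. \<Sum>a<m. gr_basis (exp (2 * of_real pi * \<i> * of_nat a / of_nat m)) z)"

definition Dw :: "nat \<Rightarrow> (nat \<Rightarrow> rat) \<Rightarrow> qgr" where
  "Dw n w = gr_prod (\<lambda>j. case quotient_of (w j) of (s, t) \<Rightarrow>
      gr_diff (gr_smult (1 / of_int s) (Lambda (nat t))) (Lambda 1)) n"

end

theory Submission
  imports Defs
begin

text \<open>The expansion \<open>\<rho>(x # xs) = \<Prod>(x # xs) - \<rho>(xs)\<close> turns the cyclic shifts
  \<open>v\<^sub>j\<close> of \<open>\<rho>\<close> into solutions of \<open>a\<^sub>j v\<^sub>j + v\<^sub>j\<^sub>-\<^sub>1 = d\<close>, so \<open>v / d\<close> solves the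
  system; it is the only solution because a homogeneous solution satisfies
  \<open>u\<^sub>1 = (-1)\<^sup>n (\<Prod>a) u\<^sub>1\<close>. Grouping \<open>\<rho>\<close> into the nonnegative terms
  \<open>(x\<^sub>1 - 1) x\<^sub>2 \<Prod>(x\<^sub>3 ...)\<close> gives \<open>v\<^sub>j \<ge> 1\<close>, and \<open>gcd(v\<^sub>j, d)\<close> is constant along the
  recurrence, so all \<open>w\<^sub>j\<close> share the denominator \<open>t = d / \<gamma>\<close>.
  Since \<open>\<Lambda>\<^sub>t\<close> is the indicator of the \<open>t\<close>-th roots of unity, \<open>\<Lambda>\<^sub>t \<Lambda>\<^sub>t = t \<Lambda>\<^sub>t\<close>
  and \<open>\<Lambda>\<^sub>1\<close> is the unit, so every partial product of
  \<open>D\<^sub>w\<close> lies in the span of \<open>\<Lambda>\<^sub>t\<close> and \<open>\<Lambda>\<^sub>1\<close>, and tracking the two coefficients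
  computes it.\<close>

section \<open>The alternating product sum \<open>\<rho>\<close>\<close>

lemma rho_Nil [simp]: "rho [] = 1"
  by (simp add: rho_def)

lemma rho_Cons: "rho (x # xs) = prod_list (x # xs) - rho xs"
proof -
  have "rho (x # xs) = (\<Sum>i<Suc (length xs). (-1)^i * prod_list (drop i (x # xs)))
      + (-1) ^ Suc (length xs)"
    by (simp add: rho_def)
  also have "\<dots> = prod_list (x # xs) + (\<Sum>i<length xs. (-1)^Suc i * prod_list (drop i xs))
      + (-1) ^ Suc (length xs)"
    by (subst sum.lessThan_Suc_shift) simp
  also have "\<dots> = prod_list (x # xs) - rho xs"
    by (simp add: rho_def sum_negf)
  finally show ?thesis .
qed

lemma rho_snoc: "rho (xs @ [y]) = y * rho xs - (-1) ^ length xs"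
  by (induction xs) (auto simp: rho_Cons algebra_simps)

lemma rho_Cons_Cons: "rho (x # y # zs) = (x - 1) * y * prod_list zs + rho zs"
  by (simp add: rho_Cons algebra_simps)

lemma prod_list_ge_1: "\<forall>x\<in>set xs. x \<ge> (1::int) \<Longrightarrow> prod_list xs \<ge> 1"
  by (induction xs) (auto intro: order_trans[OF _ mult_mono, of _ "1*1"])

lemma rho_Cons_Cons_first_term_nonneg:
  "\<forall>x\<in>set (x # y # zs). x \<ge> (1::int) \<Longrightarrow> (x - 1) * y * prod_list zs \<ge> 0"
  using prod_list_ge_1[of zs] by simp

lemma rho_nonneg: "\<forall>x\<in>set xs. x \<ge> (1::int) \<Longrightarrow> rho xs \<ge> 0"
proof (induction xs rule: induct_list012)
  case (3 x y zs)
  then show ?case using rho_Cons_Cons_first_term_nonneg[OF "3.prems"] by (simp add: rho_Cons_Cons)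
qed (simp_all add: rho_Cons)

lemma rho_eq_0_imp_nth_even_eq_1:
  assumes "\<forall>x\<in>set xs. x \<ge> (1::int)" "rho xs = 0" "i < length xs" "even i"
  shows "xs ! i = 1"
  using assms
proof (induction xs arbitrary: i rule: induct_list012)
  case (2 x)
  then show ?case by (simp add: rho_Cons)
next
  case (3 x y zs)
  have "(x - 1) * y * prod_list zs + rho zs = 0"
    using "3.prems"(2) by (simp add: rho_Cons_Cons)
  then have "(x - 1) * y * prod_list zs = 0" and "rho zs = 0"
    using rho_Cons_Cons_first_term_nonneg[OF "3.prems"(1)] rho_nonneg[of zs] "3.prems"(1)
    by (simp_all add: add_nonneg_eq_0_iff)
  moreover have "y \<ge> 1" "prod_list zs \<ge> 1"
    using "3.prems"(1) prod_list_ge_1[of zs] by auto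
  ultimately have "x = 1" by simp
  show ?case
  proof (cases i)
    case (Suc i')
    with "3.prems" obtain i'' where "i = Suc (Suc i'')" by (cases i') auto
    with "3.IH"(1)[of i''] "3.prems" \<open>rho zs = 0\<close> show ?thesis by auto
  qed (simp add: \<open>x = 1\<close>)
qed simp

lemma rho_ge_1_if_even_length:
  "\<forall>x\<in>set xs. x \<ge> (1::int) \<Longrightarrow> even (length xs) \<Longrightarrow> rho xs \<ge> 1"
proof (induction xs rule: induct_list012)
  case (3 x y zs)
  then show ?case using rho_Cons_Cons_first_term_nonneg[OF "3.prems"(1)] by (simp add: rho_Cons_Cons)
qed auto

section \<open>Cyclic shifts\<close>

definition cyc_idx :: "nat \<Rightarrow> nat \<Rightarrow> nat \<Rightarrow> nat" where
  "cyc_idx n j k = (j + n - k - 1) mod n + 1"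

abbreviation cyc_prev :: "nat \<Rightarrow> nat \<Rightarrow> nat" where
  "cyc_prev n j \<equiv> if j = 1 then n else j - 1"

lemma vlist_conv_cyc_idx: "vlist n a j = map (\<lambda>k. int (a (cyc_idx n j k))) [1..<n]"
  by (simp add: vlist_def cyc_idx_def)

lemma cyc_idx_eq:
  assumes "1 \<le> k" "k < n" "1 \<le> j" "j \<le> n"
  shows "cyc_idx n j k = (if k < j then j - k else j + n - k)"
proof (cases "k < j")
  case True
  then have "j + n - k - 1 = (j - k - 1) + n" using assms by arith
  then have "(j + n - k - 1) mod n = j - k - 1"
    using True assms by (simp only: mod_add_self2) simp
  then show ?thesis using True by (simp add: cyc_idx_def)
qed (use assms in \<open>simp add: cyc_idx_def\<close>)

lemma cyc_idx_in_range: "0 < n \<Longrightarrow> cyc_idx n j k \<in> {1..n}"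
  by (simp add: cyc_idx_def Suc_leI)

lemma cyc_idx_hits:
  assumes "j \<in> {1..n}" "m \<in> {1..n}" "m \<noteq> j"
  obtains k where "k \<in> {1..<n}" "cyc_idx n j k = m" "even n \<Longrightarrow> even k \<longleftrightarrow> (even j \<longleftrightarrow> even m)"
proof
  let ?k = "if m < j then j - m else j + n - m"
  show "?k \<in> {1..<n}" "cyc_idx n j ?k = m"
    using assms by (auto simp: cyc_idx_eq)
  show "even ?k \<longleftrightarrow> (even j \<longleftrightarrow> even m)" if "even n"
    using assms that by (auto simp: even_diff_nat)
qed

lemma prod_cyc_idx:
  assumes "1 \<le> j" "j \<le> n"
  shows "(\<Prod>k\<in>{1..<n}. f (cyc_idx n j k)) = (\<Prod>i\<in>{1..n} - {j}. (f i :: 'a::comm_monoid_mult))"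
  by (rule prod.reindex_bij_witness[where i="\<lambda>i. if i < j then j - i else j + n - i"
        and j="cyc_idx n j"]) (use assms in \<open>auto simp: cyc_idx_eq\<close>)

lemma prod_vlist:
  assumes "1 \<le> j" "j \<le> n"
  shows "int (a j) * prod_list (vlist n a j) = (\<Prod>i=1..n. int (a i))"
proof -
  have "prod_list (vlist n a j) = (\<Prod>i\<in>{1..n} - {j}. int (a i))"
    using prod_cyc_idx[OF assms, of "\<lambda>i. int (a i)"]
    by (simp add: vlist_conv_cyc_idx prod.distinct_set_conv_list[symmetric])
  then show ?thesis
    using prod.remove[of "{1..n}" j "\<lambda>i. int (a i)"] assms by simp
qed

lemma vlist_Cons_snoc:
  fixes a :: "nat \<Rightarrow> nat"
  assumes n: "n \<ge> 2" and j: "1 \<le> j" "j \<le> n"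
  defines "L \<equiv> map (\<lambda>k. int (a (cyc_idx n j (Suc k)))) [1..<n-1]"
  shows "vlist n a j = int (a (cyc_prev n j)) # L"
    and "vlist n a (cyc_prev n j) = L @ [int (a j)]"
proof -
  have "[1..<n] = 1 # map Suc [1..<n-1]"
    using n by (simp add: upt_conv_Cons map_Suc_upt)
  moreover have "cyc_idx n j 1 = cyc_prev n j"
    using n j by (simp add: cyc_idx_eq)
  ultimately show "vlist n a j = int (a (cyc_prev n j)) # L"
    by (simp add: vlist_conv_cyc_idx L_def)
  have "[1..<n] = [1..<n-1] @ [n-1]"
    using n by (cases n) (simp_all add: upt_Suc)
  moreover have "cyc_idx n (cyc_prev n j) k = cyc_idx n j (Suc k)" if "1 \<le> k" "k < n - 1" for k
    using that j n by (auto simp: cyc_idx_eq)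
  moreover have "cyc_idx n (cyc_prev n j) (n - 1) = j"
    using j n by (auto simp: cyc_idx_eq)
  ultimately show "vlist n a (cyc_prev n j) = L @ [int (a j)]"
    by (simp add: vlist_conv_cyc_idx L_def)
qed

lemma rho_vlist_recurrence:
  assumes n: "n \<ge> 1" and j: "1 \<le> j" "j \<le> n"
  shows "int (a j) * rho (vlist n a j) + rho (vlist n a (cyc_prev n j))
       = (\<Prod>i=1..n. int (a i)) - (-1) ^ n"
proof (cases "n = 1")
  case True
  then show ?thesis using j by (simp add: vlist_def)
next
  case False
  then have n2: "n \<ge> 2" using n by simp
  define L where "L = map (\<lambda>k. int (a (cyc_idx n j (Suc k)))) [1..<n-1]"
  note split = vlist_Cons_snoc[OF n2 j, of a, folded L_def]
  have "length L = n - 2" by (simp add: L_def)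
  moreover have "(-1::int) ^ (n - 2) = (-1) ^ n"
    using n2 by (metis le_add_diff_inverse2 power_add power_minus1_even mult_1_right)
  ultimately have "int (a j) * rho (vlist n a j) + rho (vlist n a (cyc_prev n j))
      = int (a j) * prod_list (vlist n a j) - (-1) ^ n"
    unfolding split by (simp add: rho_Cons rho_snoc algebra_simps)
  then show ?thesis using prod_vlist[OF j] by simp
qed

lemma vlist_ge_1: "\<forall>j\<in>{1..n}. a j \<ge> 1 \<Longrightarrow> \<forall>x\<in>set (vlist n a j). x \<ge> 1"
  using cyc_idx_in_range[of n j] by (cases "n = 0") (fastforce simp: vlist_conv_cyc_idx)+

lemma rho_vlist_pos:
  assumes n: "n \<ge> 1" and j: "j \<in> {1..n}" and apos: "\<forall>j\<in>{1..n}. a j \<ge> 1"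
    and par: "even n \<Longrightarrow> \<not> (\<forall>j\<in>{1..n}. even j \<longrightarrow> a j = 1) \<and> \<not> (\<forall>j\<in>{1..n}. odd j \<longrightarrow> a j = 1)"
  shows "rho (vlist n a j) \<ge> 1"
proof (cases "even n")
  case False
  then show ?thesis using rho_ge_1_if_even_length[OF vlist_ge_1[OF apos]] n
    by (simp add: vlist_def)
next
  case True
  show ?thesis
  proof (rule ccontr)
    assume "\<not> ?thesis"
    then have "rho (vlist n a j) = 0"
      using rho_nonneg[OF vlist_ge_1[OF apos, of j]] by linarith
    \<comment> \<open>the even positions of \<open>vlist n a j\<close> are the indices at odd cyclic distance from \<open>j\<close>\<close>
    then have ones: "a m = 1" if m: "m \<in> {1..n}" "even m \<noteq> even j" for m
    proof -
      obtain k where k: "k \<in> {1..<n}" "cyc_idx n j k = m" "odd k"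
        using cyc_idx_hits[OF j m(1)] m True by (metis atLeastAtMost_iff)
      have "k - 1 < length (vlist n a j)" using k by (auto simp: vlist_def)
      then have "vlist n a j ! (k - 1) = 1"
        using rho_eq_0_imp_nth_even_eq_1[OF vlist_ge_1[OF apos] \<open>rho _ = 0\<close>, of "k - 1"] k
        by simp
      moreover have "vlist n a j ! (k - 1) = int (a (cyc_idx n j k))"
        using k by (auto simp: vlist_conv_cyc_idx nth_map)
      ultimately show ?thesis using k by simp
    qed
    then show False
      using par True by (cases "even j") auto
  qed
qed

section \<open>The cyclic linear system\<close>

lemma cyc_prev_in_range: "j \<in> {1..n} \<Longrightarrow> cyc_prev n j \<in> {1..n}"
  by auto

lemma prod_cyc_prev: "(\<Prod>j=1..n. f (cyc_prev n j)) = (\<Prod>j=1..n. (f j :: 'a::comm_monoid_mult))"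
  by (rule prod.reindex_bij_witness[where i="\<lambda>j. if j = n then 1 else j + 1" and j="cyc_prev n"])
    auto

lemma cyclic_homogeneous_chain:
  fixes u :: "nat \<Rightarrow> 'a::comm_ring_1"
  assumes eq: "\<forall>j\<in>{1..n}. of_nat (a j) * u j + u (cyc_prev n j) = 0" and "k < n"
  shows "u 1 = (-1)^k * (\<Prod>i=2..k+1. of_nat (a i)) * u (k+1)"
  using \<open>k < n\<close>
proof (induction k)
  case (Suc k)
  have "of_nat (a (k+2)) * u (k+2) + u (k+1) = 0"
    using eq Suc.prems by (auto dest: bspec[of _ _ "k+2"])
  then have "u (k+1) = - of_nat (a (k+2)) * u (k+2)"
    by (simp add: algebra_simps eq_neg_iff_add_eq_0)
  then show ?case
    using Suc by (simp add: prod.cl_ivl_Suc)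
qed simp

lemma cyclic_homogeneous_around:
  fixes u :: "nat \<Rightarrow> 'a::comm_ring_1"
  assumes eq: "\<forall>j\<in>{1..n}. of_nat (a j) * u j + u (cyc_prev n j) = 0" and n: "n \<ge> 1"
  shows "(-1)^n * (\<Prod>i=1..n. of_nat (a i)) * u 1 = u 1"
proof -
  have "of_nat (a 1) * u 1 + u n = 0"
    using eq n by (auto dest: bspec[of _ _ 1])
  then have un: "u n = - (of_nat (a 1) * u 1)"
    by (simp add: eq_neg_iff_add_eq_0 add.commute)
  have sign: "(-1::'a)^(n-1) * (-1) = (-1)^n"
    using n by (cases n) auto
  have split1: "(\<Prod>i=1..n. of_nat (a i)) = of_nat (a 1) * (\<Prod>i=2..n. of_nat (a i) :: 'a)"
    using n by (simp add: prod.atLeast_Suc_atMost numeral_2_eq_2)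
  have "u 1 = (-1)^(n-1) * (\<Prod>i=2..n. of_nat (a i)) * u n"
    using cyclic_homogeneous_chain[OF eq, of "n - 1"] n by simp
  also have "\<dots> = ((-1)^(n-1) * (-1)) * (of_nat (a 1) * (\<Prod>i=2..n. of_nat (a i))) * u 1"
    by (simp add: un algebra_simps)
  finally show ?thesis
    by (simp only: sign split1)
qed

lemma cyclic_homogeneous_zero:
  fixes u :: "nat \<Rightarrow> 'a::field_char_0"
  assumes apos: "\<forall>j\<in>{1..n}. a j \<ge> 1"
    and eq: "\<forall>j\<in>{1..n}. of_nat (a j) * u j + u (cyc_prev n j) = 0"
    and nonsing: "(\<Prod>j=1..n. int (a j)) \<noteq> (-1) ^ n"
  shows "\<forall>j\<in>{1..n}. u j = 0"
proof -
  have n: "n \<ge> 1" using nonsing by (cases n) auto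
  have "(-1)^n * (\<Prod>i=1..n. of_nat (a i)) \<noteq> (1::'a)"
  proof
    assume "(-1)^n * (\<Prod>i=1..n. of_nat (a i)) = (1::'a)"
    then have "(-1)^n * ((-1)^n * (\<Prod>i=1..n. of_nat (a i))) = ((-1)^n :: 'a)"
      by simp
    then have "of_int (\<Prod>i=1..n. int (a i)) = (of_int ((-1)^n) :: 'a)"
      by (simp flip: mult.assoc power_mult_distrib)
    then show False using nonsing by (simp only: of_int_eq_iff)
  qed
  then have "u 1 = 0"
    using cyclic_homogeneous_around[OF eq n] by (simp only: mult_cancel_right2 simp_thms)
  show ?thesis
  proof
    fix j assume "j \<in> {1..n}"
    then obtain k where k: "j = k + 1" "k < n" by (cases j) auto
    have "(\<Prod>i=2..k+1. of_nat (a i)) \<noteq> (0::'a)"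
      using apos k by (auto simp: prod_zero_iff Suc_le_eq)
    then show "u j = 0"
      using cyclic_homogeneous_chain[OF eq k(2)] \<open>u 1 = 0\<close> k by simp
  qed
qed

lemma cyclic_system_unique:
  fixes w w' :: "nat \<Rightarrow> 'a::field_char_0"
  assumes "\<forall>j\<in>{1..n}. a j \<ge> 1"
    and "\<forall>j\<in>{1..n}. of_nat (a j) * w j + w (cyc_prev n j) = 1"
    and "\<forall>j\<in>{1..n}. of_nat (a j) * w' j + w' (cyc_prev n j) = 1"
    and "(\<Prod>j=1..n. int (a j)) \<noteq> (-1) ^ n"
  shows "\<forall>j\<in>{1..n}. w' j = w j"
proof -
  have "\<forall>j\<in>{1..n}. of_nat (a j) * (w' j - w j) + (w' (cyc_prev n j) - w (cyc_prev n j)) = 0"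
  proof
    fix j assume j: "j \<in> {1..n}"
    have "of_nat (a j) * w j + w (cyc_prev n j) = 1" "of_nat (a j) * w' j + w' (cyc_prev n j) = 1"
      using assms(2,3) j by blast+
    then show "of_nat (a j) * (w' j - w j) + (w' (cyc_prev n j) - w (cyc_prev n j)) = 0"
      by (simp add: algebra_simps)
  qed
  then have "\<forall>j\<in>{1..n}. w' j - w j = 0"
    by (rule cyclic_homogeneous_zero[OF assms(1) _ assms(4), of "\<lambda>j. w' j - w j"])
  then show ?thesis by simp
qed

lemma cyclic_system_of_recurrence:
  fixes v :: "nat \<Rightarrow> int"
  assumes "d \<noteq> 0" and "\<forall>j\<in>{1..n}. int (a j) * v j + v (cyc_prev n j) = d"
  shows "\<forall>j\<in>{1..n}. of_nat (a j) * (of_int (v j) / of_int d)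
           + of_int (v (cyc_prev n j)) / of_int d = (1 :: 'a::field_char_0)"
proof
  fix j assume "j \<in> {1..n}"
  then have "of_int (int (a j) * v j + v (cyc_prev n j)) = (of_int d :: 'a)"
    using assms(2) by simp
  then show "of_nat (a j) * (of_int (v j) / of_int d)
      + of_int (v (cyc_prev n j)) / of_int d = (1 :: 'a)"
    using assms(1) by (simp add: field_simps)
qed

lemma cyclic_recurrence_less:
  fixes v :: "nat \<Rightarrow> int"
  assumes "\<forall>j\<in>{1..n}. int (a j) * v j + v (cyc_prev n j) = d"
    and "\<forall>j\<in>{1..n}. a j \<ge> 1" and "\<forall>j\<in>{1..n}. v j \<ge> 1" and j: "j \<in> {1..n}"
  shows "v j < d"
proof -
  have "v j \<ge> 1" "int (a j) \<ge> 1" using assms(2,3) j by auto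
  then have "v j \<le> int (a j) * v j"
    using mult_right_mono[of 1 "int (a j)" "v j"] by simp
  then show ?thesis
    using assms(1,3) j cyc_prev_in_range[OF j] by fastforce
qed

lemma prod_inv_minus_1_eq_prod:
  fixes w :: "nat \<Rightarrow> 'a::field"
  assumes sys: "\<forall>j\<in>{1..n}. of_nat (a j) * w j + w (cyc_prev n j) = 1"
    and nonzero: "\<forall>j\<in>{1..n}. w j \<noteq> 0"
  shows "(\<Prod>j=1..n. 1 / w j - 1) = (\<Prod>j=1..n. of_nat (a j))"
proof -
  \<comment> \<open>\<open>1 / w\<^sub>j\<^sub>-\<^sub>1 - 1 = a\<^sub>j w\<^sub>j / w\<^sub>j\<^sub>-\<^sub>1\<close>, and the quotients telescope around the cycle\<close>
  have "(\<Prod>j=1..n. 1 / w j - 1) = (\<Prod>j=1..n. 1 / w (cyc_prev n j) - 1)"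
    by (rule prod_cyc_prev[symmetric])
  also have "\<dots> = (\<Prod>j=1..n. of_nat (a j) * w j / w (cyc_prev n j))"
  proof (rule prod.cong)
    fix j assume j: "j \<in> {1..n}"
    then have "w (cyc_prev n j) = 1 - of_nat (a j) * w j" using sys by (auto simp: algebra_simps)
    then show "1 / w (cyc_prev n j) - 1 = of_nat (a j) * w j / w (cyc_prev n j)"
      using nonzero cyc_prev_in_range[OF j] by (simp add: field_simps)
  qed simp
  also have "\<dots> = (\<Prod>j=1..n. of_nat (a j)) * (\<Prod>j=1..n. w j) / (\<Prod>j=1..n. w (cyc_prev n j))"
    by (simp add: prod.distrib prod_dividef)
  also have "\<dots> = (\<Prod>j=1..n. of_nat (a j))"
    unfolding prod_cyc_prev using nonzero by (simp add: prod_zero_iff)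
  finally show ?thesis .
qed

section \<open>Reduced fractions\<close>

lemma gcd_cyclic_recurrence:
  fixes v :: "nat \<Rightarrow> int"
  assumes rec: "\<forall>j\<in>{1..n}. int (a j) * v j + v (cyc_prev n j) = d" and j: "j \<in> {1..n}"
  shows "gcd (v j) d = gcd (v 1) d"
proof -
  have gcd_step: "gcd (v j) d dvd gcd (v (cyc_prev n j)) d" if "j \<in> {1..n}" for j
  proof -
    have "v (cyc_prev n j) = d - int (a j) * v j" using rec that by (auto simp: algebra_simps)
    then show ?thesis by simp
  qed
  have descend: "gcd (v k) d dvd gcd (v i) d" if "1 \<le> i" "i \<le> k" "k \<le> n" for i k
    using that(2,3)
  proof (induction k rule: dec_induct)
    case (step m)
    then show ?case using gcd_step[of "Suc m"] \<open>1 \<le> i\<close> by (auto intro: dvd_trans)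
  qed simp
  have "gcd (v 1) d dvd gcd (v n) d" using gcd_step[of 1] j by simp
  moreover have "gcd (v j) d dvd gcd (v 1) d" using descend[of 1 j] j by simp
  moreover have "gcd (v n) d dvd gcd (v j) d" using descend[of j n] j by simp
  ultimately show ?thesis by (meson dvd_trans gcd_ge_0_int zdvd_antisym_nonneg)
qed

lemma quotient_of_int_div:
  "d > 0 \<Longrightarrow> quotient_of (of_int v / of_int d) = (v div gcd v d, d div gcd v d)"
  by (simp add: Fract_of_int_quotient[symmetric] quotient_of_Fract normalize_def Let_def)

section \<open>The group ring computation\<close>

lemma Lambda_eq_roots_unity: "m > 0 \<Longrightarrow> Lambda m z = of_bool (z ^ m = 1)"
proof -
  assume m: "m > 0"
  have "exp (2 * of_real pi * \<i> * of_nat k / of_nat m) = cis (2 * pi * real k / real m)" for k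
    by (simp add: cis_conv_exp mult_ac)
  then have "Lambda m z = (\<Sum>k<m. gr_basis (cis (2 * pi * real k / real m)) z)"
    by (simp add: Lambda_def)
  also have "\<dots> = (\<Sum>y\<in>{y. y ^ m = 1}. gr_basis y z)"
    by (rule sum.reindex_bij_betw[OF bij_betw_roots_unity[OF m]])
  also have "\<dots> = of_bool (z ^ m = 1)"
    using finite_roots_unity[of m, where 'a=complex] m by (simp add: gr_basis_def)
  finally show ?thesis .
qed

lemma Lambda_1: "Lambda 1 = gr_basis 1"
  by (rule ext) (simp add: Lambda_eq_roots_unity gr_basis_def)

lemma gr_mult_finite_support:
  assumes A: "finite A" "0 \<notin> A" and supp: "\<And>x. f x \<noteq> 0 \<Longrightarrow> x \<in> A"
  shows "gr_mult f g z = (\<Sum>x\<in>A. f x * g (z / x))"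
proof -
  define B where "B = {x\<in>A. f x \<noteq> 0 \<and> g (z / x) \<noteq> 0}"
  have support_eq: "{(x, y). f x \<noteq> 0 \<and> g y \<noteq> 0 \<and> x * y = z} = (\<lambda>x. (x, z / x)) ` B"
  proof (intro set_eqI iffI)
    fix p assume "p \<in> {(x, y). f x \<noteq> 0 \<and> g y \<noteq> 0 \<and> x * y = z}"
    then obtain x y where p: "p = (x, y)" "f x \<noteq> 0" "g y \<noteq> 0" "x * y = z" by auto
    then have "x \<in> A" "x \<noteq> 0" using supp A by auto
    then show "p \<in> (\<lambda>x. (x, z / x)) ` B" using p by (auto simp: B_def field_simps)
  qed (use A in \<open>auto simp: B_def\<close>)
  have "gr_mult f g z = (\<Sum>x\<in>B. f x * g (z / x))"
    unfolding gr_mult_def support_eq by (subst sum.reindex) (auto simp: inj_on_def)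
  also have "\<dots> = (\<Sum>x\<in>A. f x * g (z / x))"
    by (rule sum.mono_neutral_left) (auto simp: B_def A)
  finally show ?thesis .
qed

definition Lambda_comb :: "rat \<Rightarrow> rat \<Rightarrow> nat \<Rightarrow> qgr" where
  "Lambda_comb c e t = gr_add (gr_smult c (Lambda t)) (gr_smult e (Lambda 1))"

lemma gr_mult_Lambda_comb:
  assumes t: "t > 0"
  shows "gr_mult (Lambda_comb c e t) (gr_diff (gr_smult x (Lambda t)) (Lambda 1))
       = Lambda_comb (c * x * of_nat t - c + e * x) (- e) t"
proof
  fix z :: complex
  define R where "R = {y::complex. y ^ t = 1}"
  have R: "finite R" "0 \<notin> R" "1 \<in> R" "card R = t"
    using t finite_roots_unity[of t, where 'a=complex] card_roots_unity_eq[OF t]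
    by (auto simp: R_def power_0_left)
  have Lambda_t: "Lambda t y = of_bool (y \<in> R)" for y
    using t by (simp add: Lambda_eq_roots_unity R_def)
  have comb: "Lambda_comb c' e' t y = c' * of_bool (y \<in> R) + (if y = 1 then e' else 0)" for c' e' y
    unfolding Lambda_comb_def Lambda_1 by (simp add: gr_add_def gr_smult_def Lambda_t gr_basis_def)
  have "gr_mult (Lambda_comb c e t) (gr_diff (gr_smult x (Lambda t)) (Lambda 1)) z
      = (\<Sum>y\<in>R. Lambda_comb c e t y * (x * Lambda t (z / y) - (if z / y = 1 then 1 else 0)))"
    unfolding Lambda_1 using R(3) by (subst gr_mult_finite_support[OF R(1,2)])
      (auto simp: comb gr_diff_def gr_smult_def gr_basis_def split: if_splits)
  \<comment> \<open>for \<open>y \<in> R\<close>, \<open>z / y \<in> R\<close> iff \<open>z \<in> R\<close>\<close>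
  also have "\<dots> = (\<Sum>y\<in>R. (c + (if y = 1 then e else 0)) * (x * of_bool (z \<in> R) - (if z = y then 1 else 0)))"
    using R(2) by (intro sum.cong refl) (auto simp: comb Lambda_t R_def power_divide)
  also have "\<dots> = (\<Sum>y\<in>R. c * x * of_bool (z \<in> R) - (if z = y then c else 0)
      + (if y = 1 then e * x * of_bool (z \<in> R) - (if z = 1 then e else 0) else 0))"
    by (rule sum.cong) (auto simp: algebra_simps)
  also have "\<dots> = (c * x * of_nat t - c + e * x) * of_bool (z \<in> R) - (if z = 1 then e else 0)"
    using R by (simp add: sum.distrib sum_subtractf algebra_simps)
  also have "\<dots> = Lambda_comb (c * x * of_nat t - c + e * x) (- e) t z"
    by (simp add: comb)
  finally show "gr_mult (Lambda_comb c e t) (gr_diff (gr_smult x (Lambda t)) (Lambda 1)) z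
      = Lambda_comb (c * x * of_nat t - c + e * x) (- e) t z" .
qed

lemma Dw_common_denominator:
  fixes w :: "nat \<Rightarrow> rat" and s :: "nat \<Rightarrow> int"
  assumes T: "T > 0" and quot: "\<forall>j\<in>{1..n}. quotient_of (w j) = (s j, int T)"
  shows "Dw n w = Lambda_comb (((\<Prod>j=1..n. 1 / w j - 1) - (-1)^n) / of_nat T) ((-1)^n) T"
proof -
  define F where "F = (\<lambda>j. case quotient_of (w j) of (s, t) \<Rightarrow>
      gr_diff (gr_smult (1 / of_int s) (Lambda (nat t))) (Lambda 1))"
  have "gr_prod F k = Lambda_comb (((\<Prod>j=1..k. 1 / w j - 1) - (-1)^k) / of_nat T) ((-1)^k) T"
    if "k \<le> n" for k
    using that
  proof (induction k)
    case 0
    show ?case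
      unfolding Lambda_comb_def Lambda_1 by (auto simp: gr_one_def gr_add_def gr_smult_def)
  next
    case (Suc k)
    define x where "x = 1 / rat_of_int (s (Suc k))"
    have "quotient_of (w (Suc k)) = (s (Suc k), int T)"
      using quot Suc.prems by simp
    then have F: "F (Suc k) = gr_diff (gr_smult x (Lambda T)) (Lambda 1)"
      and w: "1 / w (Suc k) - 1 = of_nat T * x - 1"
      using quotient_of_div[of "w (Suc k)"] by (simp_all add: F_def x_def)
    have "gr_prod F (Suc k) = gr_mult
        (Lambda_comb (((\<Prod>j=1..k. 1 / w j - 1) - (-1)^k) / of_nat T) ((-1)^k) T)
        (gr_diff (gr_smult x (Lambda T)) (Lambda 1))"
      using Suc.IH[OF Suc_leD[OF Suc.prems]] by (simp only: gr_prod.simps F)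
    also have "\<dots> = Lambda_comb
        ((((\<Prod>j=1..k. 1 / w j - 1) - (-1)^k) / of_nat T) * x * of_nat T
          - ((\<Prod>j=1..k. 1 / w j - 1) - (-1)^k) / of_nat T + (-1)^k * x) (- ((-1)^k)) T"
      by (rule gr_mult_Lambda_comb[OF T])
    also have "((\<Prod>j=1..k. 1 / w j - 1) - (-1)^k) / of_nat T * x * of_nat T
        - ((\<Prod>j=1..k. 1 / w j - 1) - (-1)^k) / of_nat T + (-1)^k * x
        = ((\<Prod>j=1..Suc k. 1 / w j - 1) - (-1)^Suc k) / of_nat T"
      using T by (simp add: prod.nat_ivl_Suc' w field_simps)
    finally show ?case by simp
  qed
  then show ?thesis
    unfolding Dw_def F_def[symmetric] by simp
qed

theorem lemma4p1:
  fixes n :: nat and a :: "nat \<Rightarrow> nat"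
  defines "d \<equiv> (\<Prod>j=1..n. int (a j)) - (-1) ^ n"
      and "v \<equiv> \<lambda>j. rho (vlist n a j)"
  defines "w \<equiv> \<lambda>j. (of_int (v j) / of_int d :: rat)"
      and "\<gamma> \<equiv> gcd (v 1) d"
  assumes apos: "\<forall>j\<in>{1..n}. a j \<ge> 1"
      and dpos: "d > 0"
      and par: "even n \<Longrightarrow> \<not> (\<forall>j\<in>{1..n}. even j \<longrightarrow> a j = 1) \<and> \<not> (\<forall>j\<in>{1..n}. odd j \<longrightarrow> a j = 1)"
  shows "(\<forall>j\<in>{1..n}. of_nat (a j) * w j + w (if j = 1 then n else j - 1) = 1)
    \<and> (\<forall>w' :: nat \<Rightarrow> rat. (\<forall>j\<in>{1..n}. of_nat (a j) * w' j + w' (if j = 1 then n else j - 1) = 1)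
          \<longrightarrow> (\<forall>j\<in>{1..n}. w' j = w j))
    \<and> (\<forall>j\<in>{1..n}. 0 < w j \<and> w j < 1)
    \<and> (\<forall>j\<in>{1..n}. quotient_of (w j) = (v j div \<gamma>, d div \<gamma>))
    \<and> (\<forall>j\<in>{1..n}. gcd (v j) d = \<gamma>)
    \<and> (\<Prod>j=1..n. 1 / w j - 1) = of_nat (\<Prod>j=1..n. a j)
    \<and> Dw n w = gr_add (gr_smult (of_int \<gamma>) (Lambda (nat (d div \<gamma>)))) (gr_smult ((-1) ^ n) (Lambda 1))"
proof -
  have n: "n \<ge> 1" using dpos by (cases n) (simp_all add: d_def)
  have nonsing: "(\<Prod>j=1..n. int (a j)) \<noteq> (-1) ^ n" using dpos by (simp add: d_def)
  have rec: "\<forall>j\<in>{1..n}. int (a j) * v j + v (cyc_prev n j) = d"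
    using rho_vlist_recurrence[OF n] by (simp add: v_def d_def)
  have vpos: "\<forall>j\<in>{1..n}. v j \<ge> 1"
    using rho_vlist_pos[OF n _ apos par] by (simp add: v_def)
  have sys: "\<forall>j\<in>{1..n}. of_nat (a j) * w j + w (cyc_prev n j) = 1"
    using cyclic_system_of_recurrence[OF _ rec] dpos by (simp add: w_def)
  have bounds: "\<forall>j\<in>{1..n}. 0 < w j \<and> w j < 1"
    using vpos cyclic_recurrence_less[OF rec apos vpos] dpos
    by (auto simp: w_def zero_less_divide_iff divide_less_eq_1)
  have gcds: "\<forall>j\<in>{1..n}. gcd (v j) d = \<gamma>"
    unfolding \<gamma>_def using gcd_cyclic_recurrence[OF rec] by blast
  have quots: "\<forall>j\<in>{1..n}. quotient_of (w j) = (v j div \<gamma>, d div \<gamma>)"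
    using quotient_of_int_div[OF dpos] gcds by (simp add: w_def)
  have "\<forall>j\<in>{1..n}. w j \<noteq> 0" using bounds by auto
  then have prodw: "(\<Prod>j=1..n. 1 / w j - 1) = of_nat (\<Prod>j=1..n. a j)"
    using prod_inv_minus_1_eq_prod[OF sys] by (simp add: of_nat_prod)
  have "\<gamma> > 0" "\<gamma> dvd d" using dpos by (simp_all add: \<gamma>_def)
  then have denom: "d div \<gamma> > 0" "of_int d / of_int (d div \<gamma>) = (of_int \<gamma> :: rat)"
    using dpos by (auto simp: pos_imp_zdiv_pos_iff zdvd_imp_le elim!: dvdE)
  have "Dw n w = gr_add (gr_smult (of_int \<gamma>) (Lambda (nat (d div \<gamma>)))) (gr_smult ((-1) ^ n) (Lambda 1))"
    using Dw_common_denominator[of "nat (d div \<gamma>)" n w "\<lambda>j. v j div \<gamma>"] quots prodw denom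
    by (simp add: d_def of_nat_prod Lambda_comb_def)
  then show ?thesis
    using sys cyclic_system_unique[OF apos sys _ nonsing] bounds quots gcds prodw by blast
qed

end
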